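(* Every free completely simple semigroup $S=F_{css}(X)$ of finite rank $n\ge 2$ is an equational domain in the language $\mathcal{L}_S$.
   Context: Completely simple semigroups are considered as algebras in the language $\{\cdot,{}^{-1}\}$, where they form a variety (defined by $xx^{-1}x=x$, $xx^{-1}=x^{-1}x$, $(x^{-1})^{-1}=x$, $(xyx)^{-1}(xyx)=x^{-1}x$ together with associativity); $F_{css}(X)$ is the free algebra of this variety on the set $X$, $|X|=n$. The language $\mathcal{L}_S$ is $\{\cdot,{}^{-1}\}$ plus a constant for each element of $S$. An equation is an equality of two $\mathcal{L}_S$-terms; an algebraic set is the solution set in $S^m$ of a system of equations; $S$ is an equational domain if every finite union of algebraic sets is algebraic. *)

theory Defs
  imports Main
begin

datatype 'x trm = Var 'x | Mul "'x trm" "'x trm" | Inv "'x trm"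

text \<open>Since the axioms are stated for arbitrary terms,
this is the fully invariant congruence generated by the identities.\<close>

inductive css_eq :: "'x trm \<Rightarrow> 'x trm \<Rightarrow> bool" where
  refl: "css_eq t t"
| sym: "css_eq s t \<Longrightarrow> css_eq t s"
| trans: "css_eq s t \<Longrightarrow> css_eq t u \<Longrightarrow> css_eq s u"
| cong_mul: "css_eq s s' \<Longrightarrow> css_eq t t' \<Longrightarrow> css_eq (Mul s t) (Mul s' t')"
| cong_inv: "css_eq s s' \<Longrightarrow> css_eq (Inv s) (Inv s')"
| ax_assoc: "css_eq (Mul (Mul x y) z) (Mul x (Mul y z))"
| ax_idem: "css_eq (Mul (Mul x (Inv x)) x) x"
| ax_comm: "css_eq (Mul x (Inv x)) (Mul (Inv x) x)"
| ax_invinv: "css_eq (Inv (Inv x)) x"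
| ax_cs: "css_eq (Mul (Inv (Mul (Mul x y) x)) (Mul (Mul x y) x)) (Mul (Inv x) x)"

lemma css_eq_equivp: "equivp css_eq"
  by (intro equivpI reflpI sympI transpI) (auto intro: css_eq.intros)

quotient_type 'x fcss = "'x trm" / css_eq
  by (rule css_eq_equivp)

lift_definition fcss_mul :: "'x fcss \<Rightarrow> 'x fcss \<Rightarrow> 'x fcss" is Mul
  by (rule css_eq.cong_mul)

lift_definition fcss_inv :: "'x fcss \<Rightarrow> 'x fcss" is Inv
  by (rule css_eq.cong_inv)

datatype ('c) ltrm = LVar nat | LConst 'c | LMul "'c ltrm" "'c ltrm" | LInv "'c ltrm"

fun lvars :: "'c ltrm \<Rightarrow> nat set" where
  "lvars (LVar i) = {i}"
| "lvars (LConst c) = {}"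
| "lvars (LMul s t) = lvars s \<union> lvars t"
| "lvars (LInv s) = lvars s"

fun leval :: "('a \<Rightarrow> 'a \<Rightarrow> 'a) \<Rightarrow> ('a \<Rightarrow> 'a) \<Rightarrow> 'a list \<Rightarrow> 'a ltrm \<Rightarrow> 'a" where
  "leval mul iv p (LVar i) = p ! i"
| "leval mul iv p (LConst c) = c"
| "leval mul iv p (LMul s t) = mul (leval mul iv p s) (leval mul iv p t)"
| "leval mul iv p (LInv s) = iv (leval mul iv p s)"

definition solution_set ::
  "('a \<Rightarrow> 'a \<Rightarrow> 'a) \<Rightarrow> ('a \<Rightarrow> 'a) \<Rightarrow> nat \<Rightarrow> ('a ltrm \<times> 'a ltrm) set \<Rightarrow> 'a list set" where
  "solution_set mul iv m E =
     {p. length p = m \<and> (\<forall>(s, t) \<in> E. leval mul iv p s = leval mul iv p t)}"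

definition algebraic_set ::
  "('a \<Rightarrow> 'a \<Rightarrow> 'a) \<Rightarrow> ('a \<Rightarrow> 'a) \<Rightarrow> nat \<Rightarrow> 'a list set \<Rightarrow> bool" where
  "algebraic_set mul iv m Y \<longleftrightarrow>
     (\<exists>E. (\<forall>(s, t) \<in> E. lvars s \<union> lvars t \<subseteq> {..<m}) \<and> Y = solution_set mul iv m E)"

definition equational_domain :: "('a \<Rightarrow> 'a \<Rightarrow> 'a) \<Rightarrow> ('a \<Rightarrow> 'a) \<Rightarrow> bool" where
  "equational_domain mul iv \<longleftrightarrow>
     (\<forall>m (F :: 'a list set set). finite F \<and> (\<forall>Y \<in> F. algebraic_set mul iv m Y)
        \<longrightarrow> algebraic_set mul iv m (\<Union>F))"

end

theory Submission
  imports Defs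
begin

text \<open>
  Proof strategy.  Let X be the finite type of generators and fix two distinct
  letters x0 and y1 in X.

  \<^item> We build the free group on the generators G x (x in X) and P l j (l, j in X)
    by reduced words, and on it the Rees matrix semigroup M = X \<times> F \<times> X with
    sandwich entries P l j (the entry at (x0, x0) normalised to 1).  M is a
    completely simple semigroup.
  \<^item> For every completely simple semigroup S and every map of X into S there is
    a map from M to S preserving product and inverse and sending (x, G x, x) to
    the image of x.  Hence the homomorphism Phi from F_css(X) to M induced by
    x \<mapsto> (x, G x, x) has a left inverse, i.e. F_css(X) embeds into M.
  \<^item> Inside M, the unary terms x0 y v z x0 (y, z in X) separate points and land
    in the maximal subgroup at (x0, x0), which is a free group.  In a free group
    every pair of non-trivial elements a, b admits an h, realised by a constant of
    F_css(X), such that a and h b h^-1 do not commute.  So the system of equations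
    "[D(v0) D(v1)^-1, c D'(v2) D'(v3)^-1 c^-1] = 1" (all D, D', c) has exactly
    the solution set {v0 = v1 or v2 = v3}.
  \<^item> A general criterion: an algebra with such a four-variable system and two
    distinct constants is an equational domain, since unions of two algebraic
    sets are obtained by substituting pairs of equations into the system.
\<close>

section \<open>Free groups via reduced words\<close>

text \<open>A letter is a generator with an exponent sign (True = positive).\<close>
type_synonym 'g letter = "'g \<times> bool"

fun flip :: "'g letter \<Rightarrow> 'g letter" where "flip (g, b) = (g, \<not> b)"

lemma flip_flip[simp]: "flip (flip a) = a" by (cases a) simp
lemma flip_neq[simp]: "flip a \<noteq> a" "a \<noteq> flip a" by (cases a, simp)+
lemma flip_inj[simp]: "(flip a = flip b) = (a = b)" by (cases a, cases b) auto

fun cancel1 :: "'g letter \<Rightarrow> 'g letter list \<Rightarrow> 'g letter list" where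
  "cancel1 a [] = [a]"
| "cancel1 a (b # w) = (if b = flip a then w else a # b # w)"

fun red :: "'g letter list \<Rightarrow> 'g letter list" where
  "red [] = []"
| "red (a # w) = cancel1 a (red w)"

fun reduced :: "'g letter list \<Rightarrow> bool" where
  "reduced [] = True"
| "reduced [a] = True"
| "reduced (a # b # w) = (b \<noteq> flip a \<and> reduced (b # w))"

lemma reduced_tl: "reduced (a # w) \<Longrightarrow> reduced w"
  by (cases w) auto

lemma reduced_cancel1: "reduced w \<Longrightarrow> reduced (cancel1 a w)"
  by (cases w) (auto intro: reduced_tl)

lemma reduced_red: "reduced (red w)"
  by (induction w) (auto intro: reduced_cancel1)

lemma red_reduced: "reduced w \<Longrightarrow> red w = w"
proof (induction w)
  case Nil then show ?case by simp
next
  case (Cons a w)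
  then have "red w = w" using reduced_tl by blast
  then show ?case using Cons.prems by (cases w) auto
qed

lemma red_red[simp]: "red (red w) = red w"
  by (simp add: red_reduced reduced_red)

lemma red_append_red2: "red (u @ red v) = red (u @ v)"
  by (induction u) auto

lemma cancel1_cancel1: "reduced r \<Longrightarrow> cancel1 a (cancel1 (flip a) r) = r"
proof (cases r)
  case (Cons b w)
  assume "reduced r"
  then show ?thesis using Cons by (cases w) auto
qed simp

lemma red_cancel1_append: "red (cancel1 a w @ v) = cancel1 a (red (w @ v))"
proof (cases w)
  case (Cons b w')
  show ?thesis
  proof (cases "b = flip a")
    case True
    then show ?thesis using Cons cancel1_cancel1[OF reduced_red, of a "w' @ v"] by simp
  qed (use Cons in simp)
qed simp

lemma red_append_red1: "red (red u @ v) = red (u @ v)"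
  by (induction u) (auto simp: red_cancel1_append)

definition winv :: "'g letter list \<Rightarrow> 'g letter list" where
  "winv w = rev (map flip w)"

lemma winv_Cons: "winv (a # w) = winv w @ [flip a]" by (simp add: winv_def)
lemma winv_winv[simp]: "winv (winv w) = w" by (simp add: winv_def rev_map comp_def)
lemma winv_Nil[simp]: "winv w = [] \<longleftrightarrow> w = []" by (simp add: winv_def)

lemma red_right_inv: "red (w @ winv w) = []"
proof (induction w)
  case Nil then show ?case by (simp add: winv_def)
next
  case (Cons a w)
  have "red (a # w @ winv (a # w)) = cancel1 a (red ((w @ winv w) @ [flip a]))"
    by (simp add: winv_Cons)
  also have "red ((w @ winv w) @ [flip a]) = red (red (w @ winv w) @ [flip a])"
    by (simp only: red_append_red1)
  also have "\<dots> = [flip a]" using Cons by simp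
  finally show ?case by simp
qed

lemma red_left_inv: "red (winv w @ w) = []"
  using red_right_inv[of "winv w"] by simp

typedef 'g fg = "{w :: 'g letter list. reduced w}"
  morphisms fg_rep fg_abs
  by (rule exI[of _ "[]"]) simp

lemma fg_rep_reduced: "reduced (fg_rep x)"
  using fg_rep by auto

lemma fg_rep_abs_red[simp]: "fg_rep (fg_abs (red w)) = red w"
  by (simp add: fg_abs_inverse reduced_red)

lemma red_fg_rep[simp]: "red (fg_rep x) = fg_rep x"
  by (simp add: red_reduced fg_rep_reduced)

instantiation fg :: (type) group_add
begin
definition "0 = fg_abs []"
definition "x + y = fg_abs (red (fg_rep x @ fg_rep y))"
definition "- x = fg_abs (red (winv (fg_rep x)))"
definition "x - y = x + (- (y :: 'a fg))"
instance
proof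
  fix a b c :: "'a fg"
  show "a + b + c = a + (b + c)"
    unfolding plus_fg_def
    by (simp add: red_append_red1 red_append_red2)
  show "0 + a = a" unfolding plus_fg_def zero_fg_def
    by (simp add: fg_abs_inverse fg_rep_inverse)
  show "a + 0 = a" unfolding plus_fg_def zero_fg_def
    by (simp add: fg_abs_inverse fg_rep_inverse)
  show "- a + a = 0" unfolding plus_fg_def zero_fg_def uminus_fg_def
    by (simp add: red_append_red1 red_left_inv)
  show "a + - b = a - b" by (simp add: minus_fg_def)
qed
end

lemma fg_rep_plus: "fg_rep (x + y) = red (fg_rep x @ fg_rep y)"
  by (simp add: plus_fg_def)
lemma fg_rep_zero: "fg_rep 0 = []"
  by (simp add: zero_fg_def fg_abs_inverse)
lemma fg_rep_eq_Nil: "fg_rep x = [] \<longleftrightarrow> x = 0"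
  by (metis fg_rep_inject fg_rep_zero)
lemma fg_rep_single: "fg_rep (fg_abs [a]) = [a]"
  by (simp add: fg_abs_inverse)

lemma reduced_append:
  "reduced (u @ v) \<longleftrightarrow> reduced u \<and> reduced v \<and> (u \<noteq> [] \<and> v \<noteq> [] \<longrightarrow> hd v \<noteq> flip (last u))"
proof (induction u rule: reduced.induct)
  case (2 a) then show ?case by (cases v) auto
qed auto

lemma hd_winv: "w \<noteq> [] \<Longrightarrow> hd (winv w) = flip (last w)"
  by (simp add: winv_def hd_rev last_map)
lemma last_winv: "w \<noteq> [] \<Longrightarrow> last (winv w) = flip (hd w)"
  by (simp add: winv_def last_rev hd_map)

lemma reduced_winv: "reduced w \<Longrightarrow> reduced (winv w)"
proof (induction w)
  case Nil then show ?case by (simp add: winv_def)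
next
  case (Cons a w)
  have rw: "reduced w" using Cons.prems reduced_tl by blast
  have j: "w \<noteq> [] \<Longrightarrow> hd w \<noteq> flip a" using Cons.prems by (cases w) auto
  show ?case unfolding winv_Cons reduced_append
    using Cons.IH[OF rw] j by (auto simp: last_winv)
qed

lemma fg_rep_uminus: "fg_rep (- x) = winv (fg_rep x)"
  by (simp add: uminus_fg_def red_reduced reduced_winv fg_rep_reduced fg_abs_inverse)

lemma fg_rep_plus_no_cancel:
  assumes "fg_rep x \<noteq> [] \<Longrightarrow> fg_rep y \<noteq> [] \<Longrightarrow> hd (fg_rep y) \<noteq> flip (last (fg_rep x))"
  shows "fg_rep (x + y) = fg_rep x @ fg_rep y"
  using assms by (simp add: fg_rep_plus red_reduced reduced_append fg_rep_reduced)

section \<open>Completely simple semigroups\<close>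

locale completely_simple =
  fixes mul :: "'a \<Rightarrow> 'a \<Rightarrow> 'a" (infixl "\<cdot>" 70) and inv :: "'a \<Rightarrow> 'a"
  assumes assoc: "(x \<cdot> y) \<cdot> z = x \<cdot> (y \<cdot> z)"
    and idem0: "x \<cdot> inv x \<cdot> x = x"
    and comm: "x \<cdot> inv x = inv x \<cdot> x"
    and invinv[simp]: "inv (inv x) = x"
    and csax0: "inv (x \<cdot> y \<cdot> x) \<cdot> (x \<cdot> y \<cdot> x) = inv x \<cdot> x"
begin

text \<open>Products are normalised to right-nested form; the rules below are the
  axioms in that form, together with their right-extended versions.\<close>
declare assoc[simp]

lemma idem[simp]: "x \<cdot> (inv x \<cdot> x) = x" using idem0 by simp
lemma idem_r[simp]: "x \<cdot> (inv x \<cdot> (x \<cdot> z)) = x \<cdot> z"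
  using idem by (metis assoc)
lemma inv_idem[simp]: "inv x \<cdot> (x \<cdot> inv x) = inv x"
  using idem[of "inv x"] by simp
lemma inv_idem_r[simp]: "inv x \<cdot> (x \<cdot> (inv x \<cdot> z)) = inv x \<cdot> z"
  using inv_idem by (metis assoc)
lemma x_x0[simp]: "x \<cdot> (x \<cdot> inv x) = x"
  using idem[of x] comm[of x] by simp
lemma x_x0_r[simp]: "x \<cdot> (x \<cdot> (inv x \<cdot> z)) = x \<cdot> z"
  using x_x0 by (metis assoc)
lemma ix_x0[simp]: "inv x \<cdot> (inv x \<cdot> x) = inv x"
  using x_x0[of "inv x"] by simp
lemma ix_x0_r[simp]: "inv x \<cdot> (inv x \<cdot> (x \<cdot> z)) = inv x \<cdot> z"
  using ix_x0 by (metis assoc)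
lemma csax: "inv (x \<cdot> (y \<cdot> x)) \<cdot> (x \<cdot> (y \<cdot> x)) = inv x \<cdot> x"
  using csax0 by simp

lemma idpt_inv:
  assumes ff: "f \<cdot> f = f"
  shows "inv f = f"
proof -
  let ?u = "f \<cdot> inv f"
  have uu: "?u \<cdot> ?u = ?u" by simp
  have "inv f = inv f \<cdot> (f \<cdot> f) \<cdot> inv f" using ff by simp
  also have "\<dots> = (inv f \<cdot> f) \<cdot> (f \<cdot> inv f)" by simp
  also have "\<dots> = ?u \<cdot> ?u" by (simp only: comm[of f, symmetric])
  finally have i1: "inv f = ?u" using uu by simp
  have "f = ?u \<cdot> f" using idem0[of f] by simp
  then have "f = inv f \<cdot> f" using i1 by simp
  then have "?u = f" using comm[of f] by simp
  then show ?thesis using i1 by simp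
qed

lemma sandwich:
  assumes ff: "f \<cdot> f = f" and fs: "f \<cdot> s = s" and sf: "s \<cdot> f = s"
  shows "s = inv (f \<cdot> (e \<cdot> f)) \<cdot> (f \<cdot> (e \<cdot> (s \<cdot> (e \<cdot> (f \<cdot> inv (f \<cdot> (e \<cdot> f)))))))"
proof -
  let ?g = "f \<cdot> (e \<cdot> f)"
  have fi: "inv f = f" using idpt_inv[OF ff] .
  have g1: "inv ?g \<cdot> ?g = f" using csax[of f e] fi ff by simp
  have g2: "?g \<cdot> inv ?g = f" using g1 comm[of ?g] by simp
  have "s = f \<cdot> (s \<cdot> f)" using fs sf by simp
  also have "\<dots> = (inv ?g \<cdot> ?g) \<cdot> (s \<cdot> (?g \<cdot> inv ?g))" using g1 g2 by simp
  also have "\<dots> = inv ?g \<cdot> (f \<cdot> (e \<cdot> ((f \<cdot> (s \<cdot> f)) \<cdot> (e \<cdot> (f \<cdot> inv ?g)))))" by simp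
  also have "f \<cdot> (s \<cdot> f) = s" using fs sf by simp
  finally show ?thesis by simp
qed

lemma inv_unique:
  assumes "s \<cdot> (y \<cdot> s) = s" "y \<cdot> (s \<cdot> y) = y" "s \<cdot> y = y \<cdot> s"
  shows "y = inv s"
proof -
  let ?f = "s \<cdot> inv s" and ?g = "s \<cdot> y"
  have g_f: "?g = ?g \<cdot> ?f"
  proof -
    have "?g \<cdot> ?f = y \<cdot> (s \<cdot> (inv s \<cdot> s))" using assms(3) by simp
    then show ?thesis using assms(3) by simp
  qed
  have f_gf: "?f = ?g \<cdot> ?f"
  proof -
    have "?g \<cdot> ?f = (s \<cdot> (y \<cdot> s)) \<cdot> inv s" by simp
    then show ?thesis using assms(1) by simp
  qed
  have f_g: "?f = ?g" using g_f f_gf by simp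
  have "y = ?g \<cdot> y"
  proof -
    have "?g \<cdot> y = (y \<cdot> s) \<cdot> y" using assms(3) by simp
    then show ?thesis using assms(2) by simp
  qed
  also have "\<dots> = (inv s \<cdot> s) \<cdot> y" using f_g comm[of s] by simp
  also have "\<dots> = inv s \<cdot> (s \<cdot> y)" by simp
  also have "\<dots> = inv s \<cdot> ?f" using f_g by simp
  also have "\<dots> = inv s" by simp
  finally show ?thesis .
qed

subsection \<open>The maximal subgroup at an idempotent\<close>

context
  fixes e assumes ee: "e \<cdot> e = e"
begin

text \<open>Membership in the H-class of e, which is a group with identity e.\<close>
definition inH where "inH h \<longleftrightarrow> e \<cdot> h = h \<and> h \<cdot> e = h"

lemma ee_r: "e \<cdot> (e \<cdot> z) = e \<cdot> z" using ee by (metis assoc)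
lemma inv_e: "inv e = e" using idpt_inv[OF ee] .

lemma H_l: "inH h \<Longrightarrow> e \<cdot> h = h" and H_r: "inH h \<Longrightarrow> h \<cdot> e = h"
  by (auto simp: inH_def)
lemma H_l_r: "inH h \<Longrightarrow> e \<cdot> (h \<cdot> z) = h \<cdot> z" and H_r_r: "inH h \<Longrightarrow> h \<cdot> (e \<cdot> z) = h \<cdot> z"
  by (auto simp: inH_def simp flip: assoc)

lemma H_invl: "inH h \<Longrightarrow> inv h \<cdot> h = e"
proof -
  assume h: "inH h"
  have "inv (e \<cdot> (h \<cdot> e)) \<cdot> (e \<cdot> (h \<cdot> e)) = inv e \<cdot> e" by (rule csax)
  then show ?thesis using h by (simp add: inH_def inv_e ee)
qed
lemma H_invr: "inH h \<Longrightarrow> h \<cdot> inv h = e"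
  using H_invl comm by metis
lemma H_inv: "inH h \<Longrightarrow> inH (inv h)"
proof -
  assume h: "inH h"
  have "inv h = inv h \<cdot> (h \<cdot> inv h)" by simp
  then have 1: "inv h = inv h \<cdot> e" using H_invr[OF h] by simp
  have "inv h = (inv h \<cdot> h) \<cdot> inv h" by simp
  then have 2: "inv h = e \<cdot> inv h" using H_invl[OF h] by simp
  show ?thesis using 1 2 by (simp add: inH_def)
qed
lemma H_invl_r: "inH h \<Longrightarrow> inv h \<cdot> (h \<cdot> z) = e \<cdot> z"
  using H_invl by (metis assoc)
lemma H_invr_r: "inH h \<Longrightarrow> h \<cdot> (inv h \<cdot> z) = e \<cdot> z"
  using H_invr by (metis assoc)
lemma H_mul: "inH h \<Longrightarrow> inH k \<Longrightarrow> inH (h \<cdot> k)"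
  by (simp add: inH_def) (metis assoc)
lemma H_e: "inH e" by (simp add: inH_def ee)
lemma H_sand: "inH (e \<cdot> (s \<cdot> e))"
  by (simp add: inH_def ee_r) (metis assoc ee)

lemmas Hsimps = H_l H_r H_l_r H_r_r H_invl H_invr H_invl_r H_invr_r H_inv H_mul H_e H_sand ee ee_r inv_e

lemma H_unique: "inH u \<Longrightarrow> inH v \<Longrightarrow> u \<cdot> v = e \<Longrightarrow> u = inv v"
proof -
  assume u: "inH u" and v: "inH v" and uv: "u \<cdot> v = e"
  have "u = u \<cdot> (v \<cdot> inv v)" using u v by (simp add: Hsimps)
  also have "\<dots> = (u \<cdot> v) \<cdot> inv v" by simp
  also have "\<dots> = inv v" using uv v by (simp add: Hsimps)
  finally show ?thesis .
qed

lemma rees_inv: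
  assumes ae: "a \<cdot> e = a" and eb: "e \<cdot> b = b" and ba: "b \<cdot> a = P"
    and P: "inH P" and W: "inH W"
  shows "inv (a \<cdot> (W \<cdot> b)) = a \<cdot> (inv P \<cdot> (inv W \<cdot> (inv P \<cdot> b)))"
proof -
  have ae_r: "a \<cdot> (e \<cdot> z) = a \<cdot> z" for z using ae by (metis assoc)
  have ba_r: "b \<cdot> (a \<cdot> z) = P \<cdot> z" for z using ba by (metis assoc)
  let ?s = "a \<cdot> (W \<cdot> b)" and ?y = "a \<cdot> (inv P \<cdot> (inv W \<cdot> (inv P \<cdot> b)))"
  have sy: "?s \<cdot> ?y = a \<cdot> (inv P \<cdot> b)"
    using P W by (simp add: Hsimps ba_r ae_r)
  have ys: "?y \<cdot> ?s = a \<cdot> (inv P \<cdot> b)"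
    using P W by (simp add: Hsimps ba_r ae_r)
  have sys: "?s \<cdot> (?y \<cdot> ?s) = ?s"
    using P W by (simp add: Hsimps ba_r ae_r eb)
  have ysy: "?y \<cdot> (?s \<cdot> ?y) = ?y"
    using P W by (simp add: Hsimps ba_r ae_r eb)
  show ?thesis using inv_unique[OF sys ysy] sy ys by simp
qed

end

lemma recover_from_sandwich:
  assumes ee: "e \<cdot> e = e"
  shows "x \<cdot> (inv (e \<cdot> (x \<cdot> e)) \<cdot> x) = x"
proof -
  let ?a = "e \<cdot> (x \<cdot> e)" and ?f = "x \<cdot> inv x"
  let ?z = "x \<cdot> (inv ?a \<cdot> x)"
  have ff: "?f \<cdot> ?f = ?f" by simp
  have fz: "?f \<cdot> ?z = ?z" by simp
  have zf: "?z \<cdot> ?f = ?z" by simp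
  have fx: "?f \<cdot> x = x" by simp
  have xf: "x \<cdot> ?f = x" by simp
  have Ha: "inH e ?a" using H_sand[OF ee] .
  have eze: "e \<cdot> (?z \<cdot> e) = ?a"
  proof -
    have "e \<cdot> (?z \<cdot> e) = ?a \<cdot> (inv ?a \<cdot> ?a)"
      using Ha H_inv[OF ee Ha] by (simp add: Hsimps[OF ee])
    then show ?thesis by simp
  qed
  text \<open>Both z and x lie in the H-class of f and have the same image under
    v \<mapsto> e v e, so the sandwich representation makes them equal.\<close>
  have "?z = inv (?f \<cdot> (e \<cdot> ?f)) \<cdot> (?f \<cdot> (e \<cdot> (?z \<cdot> (e \<cdot> (?f \<cdot> inv (?f \<cdot> (e \<cdot> ?f)))))))"
    by (rule sandwich[OF ff fz zf])
  also have "\<dots> = inv (?f \<cdot> (e \<cdot> ?f)) \<cdot> (?f \<cdot> ((e \<cdot> (?z \<cdot> e)) \<cdot> (?f \<cdot> inv (?f \<cdot> (e \<cdot> ?f)))))"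
    by (simp only: assoc)
  also have "\<dots> = inv (?f \<cdot> (e \<cdot> ?f)) \<cdot> (?f \<cdot> ((e \<cdot> (x \<cdot> e)) \<cdot> (?f \<cdot> inv (?f \<cdot> (e \<cdot> ?f)))))"
    by (simp only: eze)
  also have "\<dots> = inv (?f \<cdot> (e \<cdot> ?f)) \<cdot> (?f \<cdot> (e \<cdot> (x \<cdot> (e \<cdot> (?f \<cdot> inv (?f \<cdot> (e \<cdot> ?f)))))))"
    by (simp only: assoc)
  also have "\<dots> = x"
    by (rule sandwich[OF ff fx xf, symmetric])
  finally show ?thesis .
qed

end

section \<open>A Rees matrix model of the free completely simple semigroup\<close>

text \<open>Generators of the structure group: one for each letter of X and one for
  each entry of the sandwich matrix.\<close>
datatype 'x gen = G 'x | Pg 'x 'x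

type_synonym 'x rees = "'x \<times> 'x gen fg \<times> 'x"

definition pmat :: "'x \<Rightarrow> 'x \<Rightarrow> 'x \<Rightarrow> 'x gen fg" where
  "pmat x0 l j = (if l = x0 \<and> j = x0 then 0 else fg_abs [(Pg l j, True)])"

lemma pmat_base[simp]: "pmat x0 x0 x0 = 0" by (simp add: pmat_def)

fun rmul :: "'x \<Rightarrow> 'x rees \<Rightarrow> 'x rees \<Rightarrow> 'x rees" where
  "rmul x0 (i, g, l) (j, h, m) = (i, g + pmat x0 l j + h, m)"

fun rinv :: "'x \<Rightarrow> 'x rees \<Rightarrow> 'x rees" where
  "rinv x0 (i, g, l) = (i, - pmat x0 l i - g - pmat x0 l i, l)"

interpretation rees: completely_simple "rmul x0" "rinv x0"
proof
  fix a b c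
  show "rmul x0 (rmul x0 a b) c = rmul x0 a (rmul x0 b c)"
    by (cases a; cases b; cases c) (simp add: add.assoc)
  show "rmul x0 (rmul x0 a (rinv x0 a)) a = a"
    by (cases a) (simp add: algebra_simps)
  show "rmul x0 a (rinv x0 a) = rmul x0 (rinv x0 a) a"
    by (cases a) (simp add: algebra_simps)
  show "rinv x0 (rinv x0 a) = a"
    by (cases a) (simp add: algebra_simps)
  show "rmul x0 (rinv x0 (rmul x0 (rmul x0 a b) a)) (rmul x0 (rmul x0 a b) a) = rmul x0 (rinv x0 a) a"
    by (cases a; cases b) (simp add: algebra_simps)
qed

definition gG :: "'x \<Rightarrow> 'x gen fg" where "gG x = fg_abs [(G x, True)]"

definition rgen :: "'x \<Rightarrow> 'x rees" where "rgen x = (x, gG x, x)"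

subsection \<open>The model maps into every completely simple semigroup\<close>

text \<open>Given a map gen from X into a completely simple semigroup, we map the model
  into it: with e0 the idempotent of gen x0 and K = e0 (gen x0)^2 e0, an element
  (i, w, l) goes to a_i \<cdot> [w] \<cdot> b_l, where the generators of the structure group
  are sent into the maximal subgroup at e0.\<close>

context completely_simple
begin

context
  fixes gen :: "'x \<Rightarrow> 'a" and x0 :: 'x
begin

definition "e0 = gen x0 \<cdot> inv (gen x0)"
lemma e0e0: "e0 \<cdot> e0 = e0" by (simp add: e0_def)

lemmas HS = Hsimps[OF e0e0]

definition "K = e0 \<cdot> (gen x0 \<cdot> (gen x0 \<cdot> e0))"
definition "row l = e0 \<cdot> gen l"
definition "col i = gen i \<cdot> (e0 \<cdot> inv K)"

fun gval where
  "gval (G x) = K \<cdot> inv (e0 \<cdot> (gen x \<cdot> e0))"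
| "gval (Pg l j) = e0 \<cdot> (gen l \<cdot> (gen j \<cdot> (e0 \<cdot> inv K)))"

fun lval where
  "lval (g, True) = gval g"
| "lval (g, False) = inv (gval g)"

fun wval where
  "wval [] = e0"
| "wval (a # w) = lval a \<cdot> wval w"

fun psi where
  "psi (i, w, l) = col i \<cdot> (wval (fg_rep w) \<cdot> row l)"

lemma H_K: "inH e0 K"
  using H_sand[OF e0e0, of "gen x0 \<cdot> gen x0"] by (simp add: K_def)

lemma H_gval: "inH e0 (gval g)"
proof (cases g)
  case (G x)
  then show ?thesis using H_K by (simp add: HS)
next
  case (Pg l j)
  have "inH e0 (e0 \<cdot> ((gen l \<cdot> gen j) \<cdot> e0) \<cdot> inv K)"
    using H_K H_sand[OF e0e0, of "gen l \<cdot> gen j"] by (simp only: HS)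
  then show ?thesis using Pg by simp
qed

lemma H_lval: "inH e0 (lval a)"
  by (cases a; cases "snd a") (auto simp: H_gval HS)

lemma H_wval: "inH e0 (wval w)"
  by (induction w) (auto simp: H_lval HS)

lemma lval_flip: "lval (flip a) \<cdot> (lval a \<cdot> z) = e0 \<cdot> z"
  by (cases a; cases "snd a") (auto simp: H_gval HS)

lemma wval_cancel1: "wval (cancel1 a w) = wval (a # w)"
proof (cases w)
  case (Cons b w')
  show ?thesis
  proof (cases "b = flip a")
    case True
    have "wval (a # w) = lval (flip (flip a)) \<cdot> (lval (flip a) \<cdot> wval w')"
      using Cons True by simp
    also have "\<dots> = wval w'" by (simp only: lval_flip) (simp add: H_wval HS)
    finally show ?thesis using Cons True by simp
  qed (use Cons in simp)
qed simp

lemma wval_red: "wval (red w) = wval w"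
  by (induction w) (simp_all add: wval_cancel1)

lemma wval_append: "wval (u @ v) = wval u \<cdot> wval v"
  by (induction u) (auto simp: H_wval HS)

lemma wval_plus: "wval (fg_rep (x + y)) = wval (fg_rep x) \<cdot> wval (fg_rep y)"
  by (simp add: fg_rep_plus wval_red wval_append)

lemma wval_zero: "wval (fg_rep 0) = e0"
  by (simp add: fg_rep_zero)

lemma wval_uminus: "wval (fg_rep (- x)) = inv (wval (fg_rep x))"
proof -
  have "wval (fg_rep (- x)) \<cdot> wval (fg_rep x) = e0"
    using wval_plus[of "- x" x] by (simp add: wval_zero)
  then show ?thesis using H_unique[OF e0e0 H_wval H_wval] by blast
qed

lemma wval_pmat: "wval (fg_rep (pmat x0 l j)) = row l \<cdot> col j"
proof (cases "l = x0 \<and> j = x0")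
  case True
  have "row l \<cdot> col j = K \<cdot> inv K" using True by (simp add: row_def col_def K_def)
  also have "\<dots> = e0" using H_K by (simp add: HS)
  finally show ?thesis using True by (simp add: pmat_def fg_rep_zero)
next
  case False
  then have "pmat x0 l j = fg_abs [(Pg l j, True)]" unfolding pmat_def by (simp only: if_False)
  then show ?thesis using H_K by (simp add: fg_rep_single row_def col_def HS)
qed

lemma psi_mul: "psi (rmul x0 m1 m2) = psi m1 \<cdot> psi m2"
  by (cases m1; cases m2) (simp add: wval_plus wval_pmat)

lemma col_e: "col i \<cdot> e0 = col i" using H_K by (simp add: col_def HS)
lemma e_row: "e0 \<cdot> row l = row l" by (simp add: row_def HS)
lemma H_row_col: "inH e0 (row l \<cdot> col j)" using wval_pmat H_wval by metis

lemma psi_inv: "psi (rinv x0 m) = inv (psi m)"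
proof (cases m)
  case (fields i w l)
  have "inv (psi m) = col i \<cdot> (inv (row l \<cdot> col i) \<cdot> (inv (wval (fg_rep w)) \<cdot> (inv (row l \<cdot> col i) \<cdot> row l)))"
    using rees_inv[OF e0e0 col_e e_row HOL.refl H_row_col H_wval] fields by simp
  then show ?thesis using fields
    by (simp del: add_uminus_conv_diff add: diff_conv_add_uminus wval_plus wval_uminus wval_pmat)
qed

lemma psi_rgen: "psi (rgen x) = gen x"
proof -
  have "psi (rgen x) = gen x \<cdot> (inv (e0 \<cdot> (gen x \<cdot> e0)) \<cdot> gen x)"
    using H_K H_inv[OF e0e0 H_sand[OF e0e0, of "gen x"]]
    by (simp add: rgen_def gG_def fg_rep_single col_def row_def HS)
  also have "\<dots> = gen x" by (rule recover_from_sandwich[OF e0e0])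
  finally show ?thesis .
qed

fun teval :: "'x trm \<Rightarrow> 'a" where
  "teval (Var x) = gen x"
| "teval (Mul s t) = teval s \<cdot> teval t"
| "teval (Inv s) = inv (teval s)"

end
end

abbreviation phi :: "'x \<Rightarrow> 'x trm \<Rightarrow> 'x rees" where
  "phi x0 \<equiv> completely_simple.teval (rmul x0) (rinv x0) rgen"

lemma (in completely_simple) psi_phi: "psi gen x0 (phi x0 t) = teval gen t"
  by (induction t) (simp_all add: rees.teval.simps psi_rgen psi_mul psi_inv)

section \<open>F_css(X) embeds into the model\<close>

interpretation fcs: completely_simple fcss_mul fcss_inv
proof
  fix x y z :: "'a fcss"
  show "fcss_mul (fcss_mul x y) z = fcss_mul x (fcss_mul y z)" by transfer (rule css_eq.ax_assoc)
  show "fcss_mul (fcss_mul x (fcss_inv x)) x = x" by transfer (rule css_eq.ax_idem)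
  show "fcss_mul x (fcss_inv x) = fcss_mul (fcss_inv x) x" by transfer (rule css_eq.ax_comm)
  show "fcss_inv (fcss_inv x) = x" by transfer (rule css_eq.ax_invinv)
  show "fcss_mul (fcss_inv (fcss_mul (fcss_mul x y) x)) (fcss_mul (fcss_mul x y) x) = fcss_mul (fcss_inv x) x"
    by transfer (rule css_eq.ax_cs)
qed

lemma phi_resp: "css_eq s t \<Longrightarrow> phi x0 s = phi x0 t"
proof (induction rule: css_eq.induct)
  case (ax_idem x) show ?case by (simp only: rees.teval.simps rees.idem0)
next
  case (ax_comm x) show ?case by (simp only: rees.teval.simps rees.comm)
next
  case (ax_cs x y) show ?case by (simp only: rees.teval.simps rees.csax0)
qed simp_all

lift_definition Phi :: "'x \<Rightarrow> 'x fcss \<Rightarrow> 'x rees" is phi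
  by (rule phi_resp)

lemma Phi_mul: "Phi x0 (fcss_mul a b) = rmul x0 (Phi x0 a) (Phi x0 b)"
  by transfer simp
lemma Phi_inv: "Phi x0 (fcss_inv a) = rinv x0 (Phi x0 a)"
  by transfer simp

definition cv :: "'x \<Rightarrow> 'x fcss" where "cv x = abs_fcss (Var x)"

lemma Phi_cv: "Phi x0 (cv x) = rgen x"
  by (simp add: cv_def Phi.abs_eq)

lemma teval_cv: "fcs.teval cv t = abs_fcss t"
  by (induction t) (simp_all add: cv_def fcss_mul.abs_eq fcss_inv.abs_eq)

lemma psi_Phi: "fcs.psi cv x0 (Phi x0 a) = a"
  by (induct a rule: fcss.abs_induct) (simp add: Phi.abs_eq fcs.psi_phi teval_cv)

lemma Phi_inj: "Phi x0 a = Phi x0 b \<longleftrightarrow> a = b"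
  by (metis psi_Phi)

section \<open>Non-commuting conjugates in the free group\<close>

text \<open>If h starts and ends with letters avoiding the ends of a and b, then
  a h b h^-1 and h b h^-1 a are reduced as written, and differ in their first letter.\<close>
lemma noncomm_core:
  fixes \<alpha> \<beta> h :: "'g fg"
  assumes a: "\<alpha> \<noteq> 0" and b: "\<beta> \<noteq> 0" and hn: "h \<noteq> 0"
    and c1: "hd (fg_rep h) \<noteq> hd (fg_rep \<alpha>)"
    and c2: "hd (fg_rep h) \<noteq> flip (last (fg_rep \<alpha>))"
    and c3: "last (fg_rep h) \<noteq> flip (hd (fg_rep \<beta>))"
    and c4: "last (fg_rep h) \<noteq> last (fg_rep \<beta>)"
  shows "\<alpha> + (h + (\<beta> - h)) \<noteq> (h + (\<beta> - h)) + \<alpha>"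
proof -
  let ?A = "fg_rep \<alpha>" and ?B = "fg_rep \<beta>" and ?C = "fg_rep h"
  have A: "?A \<noteq> []" and B: "?B \<noteq> []" and C: "?C \<noteq> []"
    using a b hn by (auto simp: fg_rep_eq_Nil)
  have r1: "fg_rep (\<beta> - h) = ?B @ winv ?C"
    unfolding diff_conv_add_uminus
    by (subst fg_rep_plus_no_cancel) (use C c4 in \<open>auto simp: fg_rep_uminus hd_winv\<close>)
  have r2: "fg_rep (h + (\<beta> - h)) = ?C @ ?B @ winv ?C"
    by (subst fg_rep_plus_no_cancel) (use B C c3 r1 in auto)
  have r3: "fg_rep (\<alpha> + (h + (\<beta> - h))) = ?A @ ?C @ ?B @ winv ?C"
    by (subst fg_rep_plus_no_cancel) (use A C c2 r2 in auto)
  have r4: "fg_rep ((h + (\<beta> - h)) + \<alpha>) = (?C @ ?B @ winv ?C) @ ?A"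
    by (subst fg_rep_plus_no_cancel) (use A C c1 r2 in \<open>auto simp: last_winv\<close>)
  have "hd (fg_rep (\<alpha> + (h + (\<beta> - h)))) \<noteq> hd (fg_rep ((h + (\<beta> - h)) + \<alpha>))"
    using r3 r4 A C c1 by simp
  then show ?thesis by metis
qed

lemma card_exclude2:
  fixes a :: "nat \<Rightarrow> 'l"
  assumes ia: "inj_on a {..<4}"
  shows "2 \<le> card {i\<in>{..<4::nat}. a i \<noteq> f1 \<and> a i \<noteq> f2}"
proof -
  let ?I = "{i\<in>{..<4::nat}. a i \<noteq> f1 \<and> a i \<noteq> f2}"
  let ?N = "{i\<in>{..<4::nat}. \<not> (a i \<noteq> f1 \<and> a i \<noteq> f2)}"
  have "card ?N \<le> card {f1, f2}"
    by (rule card_inj_on_le[of a]) (use ia in \<open>auto simp: inj_on_def\<close>)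
  also have "\<dots> \<le> 2" by (simp add: card_insert_if)
  finally have n: "card ?N \<le> 2" .
  have u: "?I \<union> ?N = {..<4::nat}" by auto
  have "card (?I \<union> ?N) = card ?I + card ?N" by (rule card_Un_disjoint) auto
  then have "card ?I + card ?N = card {..<4::nat}" using u by simp
  then show ?thesis using n by simp
qed

lemma pick4:
  fixes a b :: "nat \<Rightarrow> 'l" and partner :: "nat \<Rightarrow> nat"
  assumes ia: "inj_on a {..<4}" and ib: "inj_on b {..<4}"
  shows "\<exists>i<4. \<exists>j<4. j \<noteq> partner i \<and> a i \<noteq> fa \<and> a i \<noteq> fb \<and> b j \<noteq> la \<and> b j \<noteq> lb"
proof -
  let ?I = "{i\<in>{..<4::nat}. a i \<noteq> fa \<and> a i \<noteq> fb}"
  let ?J = "{j\<in>{..<4::nat}. b j \<noteq> la \<and> b j \<noteq> lb}"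
  have cI: "2 \<le> card ?I" by (rule card_exclude2[OF ia])
  have cJ: "2 \<le> card ?J" by (rule card_exclude2[OF ib])
  obtain i where i: "i \<in> ?I" using cI by (metis card.empty ex_in_conv not_numeral_le_zero)
  have "card ?J - card {partner i} \<le> card (?J - {partner i})" by (rule diff_card_le_card_Diff) simp
  then have "card ?J - 1 \<le> card (?J - {partner i})" by simp
  then have "card (?J - {partner i}) \<noteq> 0" using cJ by linarith
  then have "?J - {partner i} \<noteq> {}" by (metis card.empty)
  then obtain j where j: "j \<in> ?J" "j \<noteq> partner i" by blast
  show ?thesis using i j by blast
qed

subsection \<open>Group elements realised in the H-class of (x0, x0)\<close>

definition Hset :: "'x \<Rightarrow> 'x gen fg set" where
  "Hset x0 = {h. \<exists>c. Phi x0 c = (x0, h, x0)}"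

lemma Hset_plus: "h \<in> Hset x0 \<Longrightarrow> k \<in> Hset x0 \<Longrightarrow> h + k \<in> Hset x0"
  unfolding Hset_def
proof clarify
  fix c d assume "Phi x0 c = (x0, h, x0)" "Phi x0 d = (x0, k, x0)"
  then have "Phi x0 (fcss_mul c d) = (x0, h + k, x0)" by (simp add: Phi_mul)
  then show "\<exists>c. Phi x0 c = (x0, h + k, x0)" by blast
qed

lemma Hset_uminus: "h \<in> Hset x0 \<Longrightarrow> - h \<in> Hset x0"
  unfolding Hset_def
proof clarify
  fix c assume "Phi x0 c = (x0, h, x0)"
  then have "Phi x0 (fcss_inv c) = (x0, - h, x0)" by (simp add: Phi_inv)
  then show "\<exists>c. Phi x0 c = (x0, - h, x0)" by blast
qed

lemma Hset_gG: "gG x0 \<in> Hset x0"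
  unfolding Hset_def by (metis (mono_tags) CollectI Phi_cv rgen_def)

text \<open>The element realised by e y e with e = x0 x0^-1.\<close>
lemma Hset_sandwich: "pmat x0 x0 y + gG y + pmat x0 y x0 \<in> Hset x0"
proof -
  let ?X = "cv x0" and ?Y = "cv y"
  let ?E = "fcss_mul ?X (fcss_inv ?X)"
  have "Phi x0 (fcss_mul (fcss_mul ?E ?Y) ?E) = (x0, pmat x0 x0 y + gG y + pmat x0 y x0, x0)"
    by (simp add: Phi_mul Phi_inv Phi_cv rgen_def algebra_simps)
  then show ?thesis unfolding Hset_def by blast
qed

context
  fixes x0 y1 :: 'x
  assumes y1: "y1 \<noteq> x0"
begin

text \<open>Four realised elements h_0, ..., h_3 (two inverse pairs) whose reduced words
  have pairwise distinct first letters and pairwise distinct last letters.\<close>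
fun hgen :: "nat \<Rightarrow> 'x gen fg" where
  "hgen 0 = gG x0"
| "hgen (Suc 0) = - gG x0"
| "hgen (Suc (Suc 0)) = pmat x0 x0 y1 + gG y1 + pmat x0 y1 x0"
| "hgen _ = - (pmat x0 x0 y1 + gG y1 + pmat x0 y1 x0)"

fun hword :: "nat \<Rightarrow> 'x gen letter list" where
  "hword 0 = [(G x0, True)]"
| "hword (Suc 0) = [(G x0, False)]"
| "hword (Suc (Suc 0)) = [(Pg x0 y1, True), (G y1, True), (Pg y1 x0, True)]"
| "hword _ = [(Pg y1 x0, False), (G y1, False), (Pg x0 y1, False)]"

lemma hword_rep_sandwich:
  "fg_rep (pmat x0 x0 y1 + gG y1 + pmat x0 y1 x0) = [(Pg x0 y1, True), (G y1, True), (Pg y1 x0, True)]"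
  using y1 by (simp add: pmat_def gG_def fg_rep_plus fg_rep_single)

lemma fg_rep_hgen: "fg_rep (hgen i) = hword i"
  using hword_rep_sandwich
  by (cases i rule: hgen.cases) (simp_all add: gG_def fg_rep_single fg_rep_uminus winv_def)

lemma hgen_Hset: "hgen i \<in> Hset x0"
  by (cases i rule: hgen.cases) (simp_all add: Hset_gG Hset_sandwich Hset_uminus)

text \<open>The only index whose first letter cancels against the last letter of hword i.\<close>
definition partner :: "nat \<Rightarrow> nat" where
  "partner i = (if i = 0 then 1 else if i = 1 then 0 else if i = 2 then 3 else 2)"

lemma lessThan_4: "{..<4::nat} = {0, 1, 2, 3}" by auto

lemma hword_hd_inj: "inj_on (\<lambda>i. hd (hword i)) {..<4}"
  using y1 unfolding lessThan_4 by (simp add: numeral_eq_Suc)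

lemma hword_last_inj: "inj_on (\<lambda>i. last (hword i)) {..<4}"
  using y1 unfolding lessThan_4 by (simp add: numeral_eq_Suc)

lemma hword_junction: "i < 4 \<Longrightarrow> j < 4 \<Longrightarrow> j \<noteq> partner i \<Longrightarrow> hd (hword j) \<noteq> flip (last (hword i))"
  using y1 by (auto simp: partner_def less_Suc_eq numeral_eq_Suc)

lemma hword_ne: "hword i \<noteq> []" by (cases i rule: hword.cases) auto

text \<open>Any two non-trivial elements a, b admit a realised h such that a does not
  commute with h b h^-1; h is a product h_i h_j chosen by boundary letters.\<close>
lemma noncomm:
  fixes \<alpha> \<beta> :: "'x gen fg"
  assumes a: "\<alpha> \<noteq> 0" and b: "\<beta> \<noteq> 0"
  shows "\<exists>h\<in>Hset x0. \<alpha> + (h + (\<beta> - h)) \<noteq> h + (\<beta> - h) + \<alpha>"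
proof -
  obtain i j where ij: "i < 4" "j < 4" "j \<noteq> partner i"
    "hd (hword i) \<noteq> hd (fg_rep \<alpha>)" "hd (hword i) \<noteq> flip (last (fg_rep \<alpha>))"
    "last (hword j) \<noteq> flip (hd (fg_rep \<beta>))" "last (hword j) \<noteq> last (fg_rep \<beta>)"
    using pick4[OF hword_hd_inj hword_last_inj, where fa="hd (fg_rep \<alpha>)" and fb="flip (last (fg_rep \<alpha>))"
        and partner=partner and la="flip (hd (fg_rep \<beta>))" and lb="last (fg_rep \<beta>)"] by blast
  let ?h = "hgen i + hgen j"
  have rep: "fg_rep ?h = hword i @ hword j"
    using fg_rep_plus_no_cancel[of "hgen i" "hgen j"] by (simp add: fg_rep_hgen hword_junction ij)
  have hn: "?h \<noteq> 0" using rep hword_ne by (metis Nil_is_append_conv fg_rep_zero)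
  have "\<alpha> + (?h + (\<beta> - ?h)) \<noteq> ?h + (\<beta> - ?h) + \<alpha>"
    by (rule noncomm_core[OF a b hn]) (use ij hword_ne in \<open>simp_all add: rep\<close>)
  moreover have "?h \<in> Hset x0" by (simp add: Hset_plus hgen_Hset)
  ultimately show ?thesis by blast
qed

end

section \<open>Coordinates separating the points of the model\<close>

text \<open>The group component of the element (x0 y) m (z x0), which lies in the
  H-class of (x0, x0).\<close>
definition coord :: "'x \<Rightarrow> 'x \<Rightarrow> 'x \<Rightarrow> 'x rees \<Rightarrow> 'x gen fg" where
  "coord x0 y z m = (case m of (i, g, l) \<Rightarrow>
     gG x0 + pmat x0 x0 y + gG y + pmat x0 y i + g + pmat x0 l z + gG z + pmat x0 z x0 + gG x0)"

lemma coord_eq_iff: "coord x0 y z (i, g, l) = coord x0 y z (i', g', l') \<longleftrightarrow>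
   pmat x0 y i + g + pmat x0 l z = pmat x0 y i' + g' + pmat x0 l' z"
proof -
  have cancel: "a + u + b = a + v + b \<longleftrightarrow> u = v" for a b u v :: "'x gen fg"
    by (simp add: add.assoc)
  have "coord x0 y z (i, g, l) = (gG x0 + pmat x0 x0 y + gG y) + (pmat x0 y i + g + pmat x0 l z) + (gG z + pmat x0 z x0 + gG x0)"
    "coord x0 y z (i', g', l') = (gG x0 + pmat x0 x0 y + gG y) + (pmat x0 y i' + g' + pmat x0 l' z) + (gG z + pmat x0 z x0 + gG x0)"
    by (simp_all add: coord_def add.assoc)
  then show ?thesis by (simp only: cancel)
qed

context
  fixes x0 y1 :: 'x
  assumes y1: "y1 \<noteq> x0"
begin

text \<open>Varying the left coordinate y from x0 to y1 exhibits the row index i,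
  varying the right coordinate exhibits the column index l.\<close>
lemma hd_row_change: "hd (fg_rep (pmat x0 y1 i - pmat x0 x0 i)) = (Pg y1 i, True)"
proof (cases "i = x0")
  case True then show ?thesis using y1 by (simp add: pmat_def fg_rep_single)
next
  case False
  then have "pmat x0 y1 i - pmat x0 x0 i = fg_abs [(Pg y1 i, True)] + - fg_abs [(Pg x0 i, True)]"
    using y1 by (simp add: pmat_def)
  then show ?thesis using y1
    by (simp del: add_uminus_conv_diff add: fg_rep_plus fg_rep_uminus fg_rep_single winv_def)
qed

lemma last_col_change: "last (fg_rep (- pmat x0 l x0 + pmat x0 l y1)) = (Pg l y1, True)"
proof (cases "l = x0")
  case True then show ?thesis using y1 by (simp add: pmat_def fg_rep_single)
next
  case False
  then have "- pmat x0 l x0 + pmat x0 l y1 = - fg_abs [(Pg l x0, True)] + fg_abs [(Pg l y1, True)]"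
    using y1 by (simp add: pmat_def)
  then show ?thesis using y1
    by (simp add: fg_rep_plus fg_rep_uminus fg_rep_single winv_def)
qed

lemma coord_separates:
  assumes "\<forall>y z. coord x0 y z m = coord x0 y z m'"
  shows "m = m'"
proof -
  obtain i g l where m: "m = (i, g, l)" by (cases m) auto
  obtain i' g' l' where m': "m' = (i', g', l')" by (cases m') auto
  have Q: "pmat x0 y i + g + pmat x0 l z = pmat x0 y i' + g' + pmat x0 l' z" for y z
    using assms m m' coord_eq_iff by metis
  have Q00: "pmat x0 x0 i + g + pmat x0 l x0 = pmat x0 x0 i' + g' + pmat x0 l' x0" using Q .
  have "pmat x0 y1 i - pmat x0 x0 i = (pmat x0 y1 i + g + pmat x0 l x0) - (pmat x0 x0 i + g + pmat x0 l x0)"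
    by (simp add: diff_conv_add_uminus add.assoc minus_add del: add_uminus_conv_diff)
  also have "\<dots> = (pmat x0 y1 i' + g' + pmat x0 l' x0) - (pmat x0 x0 i' + g' + pmat x0 l' x0)"
    using Q[of y1 x0] Q00 by simp
  also have "\<dots> = pmat x0 y1 i' - pmat x0 x0 i'"
    by (simp add: diff_conv_add_uminus add.assoc minus_add del: add_uminus_conv_diff)
  finally have ii: "i = i'" using hd_row_change by (metis prod.inject gen.inject)
  have "- pmat x0 l x0 + pmat x0 l y1 = - (pmat x0 x0 i + g + pmat x0 l x0) + (pmat x0 x0 i + g + pmat x0 l y1)"
    by (simp add: diff_conv_add_uminus add.assoc minus_add del: add_uminus_conv_diff)
  also have "\<dots> = - (pmat x0 x0 i' + g' + pmat x0 l' x0) + (pmat x0 x0 i' + g' + pmat x0 l' y1)"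
    using Q[of x0 y1] Q00 by simp
  also have "\<dots> = - pmat x0 l' x0 + pmat x0 l' y1"
    by (simp add: diff_conv_add_uminus add.assoc minus_add del: add_uminus_conv_diff)
  finally have ll: "l = l'" using last_col_change by (metis prod.inject gen.inject)
  have gg: "g = g'" using Q00 ii ll by (simp add: add.assoc)
  show ?thesis using m m' ii ll gg by simp
qed

end

section \<open>A criterion for equational domains\<close>

fun lsubst :: "(nat \<Rightarrow> 'c ltrm) \<Rightarrow> 'c ltrm \<Rightarrow> 'c ltrm" where
  "lsubst \<sigma> (LVar i) = \<sigma> i"
| "lsubst \<sigma> (LConst c) = LConst c"
| "lsubst \<sigma> (LMul s t) = LMul (lsubst \<sigma> s) (lsubst \<sigma> t)"
| "lsubst \<sigma> (LInv s) = LInv (lsubst \<sigma> s)"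

lemma leval_lsubst:
  "(\<forall>i\<in>lvars t. q ! i = leval mul iv p (\<sigma> i)) \<Longrightarrow> leval mul iv p (lsubst \<sigma> t) = leval mul iv q t"
  by (induction t) auto

lemma lvars_lsubst: "lvars (lsubst \<sigma> t) = (\<Union>i\<in>lvars t. lvars (\<sigma> i))"
  by (induction t) auto

definition disjunction_system :: "('a \<Rightarrow> 'a \<Rightarrow> 'a) \<Rightarrow> ('a \<Rightarrow> 'a) \<Rightarrow> ('a ltrm \<times> 'a ltrm) set \<Rightarrow> bool" where
  "disjunction_system mul iv W \<longleftrightarrow>
     (\<forall>(l, r)\<in>W. lvars l \<union> lvars r \<subseteq> {..<4}) \<and>
     (\<forall>q. length q = 4 \<longrightarrow>
        (\<forall>(l, r)\<in>W. leval mul iv q l = leval mul iv q r) \<longleftrightarrow> (q ! 0 = q ! 1 \<or> q ! 2 = q ! 3))"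

definition plug :: "'a ltrm \<Rightarrow> 'a ltrm \<Rightarrow> 'a ltrm \<Rightarrow> 'a ltrm \<Rightarrow> nat \<Rightarrow> 'a ltrm" where
  "plug s t u v i = [s, t, u, v] ! i"

lemma less_4_cases: "i < 4 \<Longrightarrow> i = 0 \<or> i = 1 \<or> i = 2 \<or> i = (3::nat)" by auto

lemma leval_plug:
  assumes "lvars l \<subseteq> {..<4}"
  shows "leval mul iv p (lsubst (plug s t u v) l) =
    leval mul iv [leval mul iv p s, leval mul iv p t, leval mul iv p u, leval mul iv p v] l"
proof (rule leval_lsubst, intro ballI)
  fix i assume "i \<in> lvars l"
  then have "i = 0 \<or> i = 1 \<or> i = 2 \<or> i = 3" using assms less_4_cases by blast
  then show "[leval mul iv p s, leval mul iv p t, leval mul iv p u, leval mul iv p v] ! i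
      = leval mul iv p (plug s t u v i)"
    unfolding plug_def by (elim disjE) simp_all
qed

lemma lvars_plug: "i < 4 \<Longrightarrow> lvars (plug s t u v i) \<subseteq> lvars s \<union> lvars t \<union> lvars u \<union> lvars v"
  unfolding plug_def by (drule less_4_cases) auto

definition join_system ::
  "('a ltrm \<times> 'a ltrm) set \<Rightarrow> ('a ltrm \<times> 'a ltrm) set \<Rightarrow> ('a ltrm \<times> 'a ltrm) set \<Rightarrow> ('a ltrm \<times> 'a ltrm) set" where
  "join_system W E1 E2 = {(lsubst (plug s t u v) l, lsubst (plug s t u v) r) | l r s t u v.
                          (l, r) \<in> W \<and> (s, t) \<in> E1 \<and> (u, v) \<in> E2}"

context
  fixes mul :: "'a \<Rightarrow> 'a \<Rightarrow> 'a" and iv :: "'a \<Rightarrow> 'a" and W :: "('a ltrm \<times> 'a ltrm) set"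
  assumes W: "disjunction_system mul iv W"
begin

lemma join_system_vars:
  assumes "\<forall>(s, t)\<in>E1. lvars s \<union> lvars t \<subseteq> {..<m}" "\<forall>(u, v)\<in>E2. lvars u \<union> lvars v \<subseteq> {..<m}"
  shows "\<forall>(a, b)\<in>join_system W E1 E2. lvars a \<union> lvars b \<subseteq> {..<m}"
proof -
  have "lvars (lsubst (plug s t u v) l) \<union> lvars (lsubst (plug s t u v) r) \<subseteq> {..<m}"
    if lr: "(l, r) \<in> W" and st: "(s, t) \<in> E1" and uv: "(u, v) \<in> E2" for l r s t u v
  proof -
    have "lvars l \<union> lvars r \<subseteq> {..<4}" using W lr unfolding disjunction_system_def by blast
    moreover have "lvars s \<union> lvars t \<union> lvars u \<union> lvars v \<subseteq> {..<m}" using assms st uv by blast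
    ultimately show ?thesis unfolding lvars_lsubst using lvars_plug by blast
  qed
  then show ?thesis unfolding join_system_def by blast
qed

lemma plugged_W_iff:
  "(\<forall>(l, r)\<in>W. leval mul iv p (lsubst (plug s t u v) l) = leval mul iv p (lsubst (plug s t u v) r))
    \<longleftrightarrow> leval mul iv p s = leval mul iv p t \<or> leval mul iv p u = leval mul iv p v"
proof -
  let ?q = "[leval mul iv p s, leval mul iv p t, leval mul iv p u, leval mul iv p v]"
  have eval: "leval mul iv p (lsubst (plug s t u v) l) = leval mul iv ?q l \<and>
      leval mul iv p (lsubst (plug s t u v) r) = leval mul iv ?q r" if "(l, r) \<in> W" for l r
  proof -
    have "lvars l \<subseteq> {..<4}" "lvars r \<subseteq> {..<4}"
      using W that unfolding disjunction_system_def by blast+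
    then show ?thesis by (simp add: leval_plug)
  qed
  have "(\<forall>(l, r)\<in>W. leval mul iv p (lsubst (plug s t u v) l) = leval mul iv p (lsubst (plug s t u v) r))
      \<longleftrightarrow> (\<forall>(l, r)\<in>W. leval mul iv ?q l = leval mul iv ?q r)"
    by (intro ball_cong) (auto dest: eval)
  also have "\<dots> \<longleftrightarrow> ?q ! 0 = ?q ! 1 \<or> ?q ! 2 = ?q ! 3"
    using W[unfolded disjunction_system_def, THEN conjunct2, rule_format, of ?q] by simp
  finally show ?thesis by simp
qed

lemma solution_set_join_system:
  "solution_set mul iv m (join_system W E1 E2) = solution_set mul iv m E1 \<union> solution_set mul iv m E2"
proof -
  let ?sat = "\<lambda>p E. \<forall>(a, b)\<in>E. leval mul iv p a = leval mul iv p b"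
  have "?sat p (join_system W E1 E2) \<longleftrightarrow> ?sat p E1 \<or> ?sat p E2" for p
  proof -
    have "?sat p (join_system W E1 E2) \<longleftrightarrow> (\<forall>(s, t)\<in>E1. \<forall>(u, v)\<in>E2.
        \<forall>(l, r)\<in>W. leval mul iv p (lsubst (plug s t u v) l) = leval mul iv p (lsubst (plug s t u v) r))"
      unfolding join_system_def by blast
    also have "\<dots> \<longleftrightarrow> (\<forall>(s, t)\<in>E1. \<forall>(u, v)\<in>E2.
        leval mul iv p s = leval mul iv p t \<or> leval mul iv p u = leval mul iv p v)"
      by (simp only: plugged_W_iff)
    also have "\<dots> \<longleftrightarrow> ?sat p E1 \<or> ?sat p E2" by blast
    finally show ?thesis .
  qed
  then show ?thesis unfolding solution_set_def by auto
qed

lemma algebraic_set_Un: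
  assumes "algebraic_set mul iv m Y1" "algebraic_set mul iv m Y2"
  shows "algebraic_set mul iv m (Y1 \<union> Y2)"
proof -
  obtain E1 where E1: "\<forall>(s, t)\<in>E1. lvars s \<union> lvars t \<subseteq> {..<m}" "Y1 = solution_set mul iv m E1"
    using assms(1) unfolding algebraic_set_def by blast
  obtain E2 where E2: "\<forall>(s, t)\<in>E2. lvars s \<union> lvars t \<subseteq> {..<m}" "Y2 = solution_set mul iv m E2"
    using assms(2) unfolding algebraic_set_def by blast
  have "Y1 \<union> Y2 = solution_set mul iv m (join_system W E1 E2)"
    by (simp add: E1(2) E2(2) solution_set_join_system)
  then show ?thesis unfolding algebraic_set_def
    using join_system_vars[OF E1(1) E2(1)] by blast
qed

end

lemma algebraic_set_empty:
  fixes mul :: "'a \<Rightarrow> 'a \<Rightarrow> 'a" and iv :: "'a \<Rightarrow> 'a" and c1 c2 :: 'a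
  assumes "c1 \<noteq> c2"
  shows "algebraic_set mul iv m {}"
  unfolding algebraic_set_def solution_set_def
  by (rule exI[of _ "{(LConst c1, LConst c2)}"]) (use assms in auto)

theorem equational_domain_if_disjunction_system:
  fixes mul :: "'a \<Rightarrow> 'a \<Rightarrow> 'a" and iv :: "'a \<Rightarrow> 'a" and c1 c2 :: 'a
  assumes "c1 \<noteq> c2" and "disjunction_system mul iv W"
  shows "equational_domain mul iv"
  unfolding equational_domain_def
proof (intro allI impI, elim conjE)
  fix m and F :: "'a list set set"
  assume "finite F" "\<forall>Y\<in>F. algebraic_set mul iv m Y"
  then show "algebraic_set mul iv m (\<Union> F)"
  proof (induction F rule: finite_induct)
    case empty then show ?case using algebraic_set_empty[OF assms(1)] by simp
  next
    case (insert Y F) then show ?case using algebraic_set_Un[OF assms(2)] by simp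
  qed
qed

section \<open>A disjunction system for F_css(X)\<close>

lemma Phi_leval:
  "(\<forall>i\<in>lvars t. i < length p) \<Longrightarrow>
   Phi x0 (leval fcss_mul fcss_inv p t) = leval (rmul x0) (rinv x0) (map (Phi x0) p) (map_ltrm (Phi x0) t)"
  by (induction t) (auto simp: Phi_mul Phi_inv)

text \<open>The term x0 y v z x0, whose value over (x0, x0) has group component coord.\<close>
definition coord_term :: "'x \<Rightarrow> 'x \<Rightarrow> 'x \<Rightarrow> 'x fcss ltrm \<Rightarrow> 'x fcss ltrm" where
  "coord_term x0 y z v =
     LMul (LMul (LMul (LMul (LConst (cv x0)) (LConst (cv y))) v) (LConst (cv z))) (LConst (cv x0))"

definition diff_term :: "'x \<Rightarrow> 'x \<Rightarrow> 'x \<Rightarrow> nat \<Rightarrow> nat \<Rightarrow> 'x fcss ltrm" where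
  "diff_term x0 y z i j = LMul (coord_term x0 y z (LVar i)) (LInv (coord_term x0 y z (LVar j)))"

definition conj_term :: "'x fcss \<Rightarrow> 'x fcss ltrm \<Rightarrow> 'x fcss ltrm" where
  "conj_term c t = LMul (LConst c) (LMul t (LInv (LConst c)))"

definition comm_eq :: "'x \<Rightarrow> 'x \<Rightarrow> 'x \<Rightarrow> 'x \<Rightarrow> 'x \<Rightarrow> 'x fcss \<Rightarrow> 'x fcss ltrm \<times> 'x fcss ltrm" where
  "comm_eq x0 y z y' z' c = (LMul (diff_term x0 y z 0 1) (conj_term c (diff_term x0 y' z' 2 3)),
                             LMul (conj_term c (diff_term x0 y' z' 2 3)) (diff_term x0 y z 0 1))"

definition comm_system :: "'x \<Rightarrow> ('x fcss ltrm \<times> 'x fcss ltrm) set" where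
  "comm_system x0 = {comm_eq x0 y z y' z' c | y z y' z' c. \<exists>h. Phi x0 c = (x0, h, x0)}"

lemma lvars_comm_eq: "comm_eq x0 y z y' z' c = (l, r) \<Longrightarrow> lvars l \<union> lvars r \<subseteq> {..<4}"
  by (auto simp: comm_eq_def conj_term_def diff_term_def coord_term_def)

lemma model_coord_term:
  "leval (rmul x0) (rinv x0) q (map_ltrm (Phi x0) (coord_term x0 y z (LVar i))) = (x0, coord x0 y z (q ! i), x0)"
  by (cases "q ! i") (simp add: coord_term_def Phi_cv rgen_def coord_def add.assoc)

lemma model_diff_term: "leval (rmul x0) (rinv x0) q (map_ltrm (Phi x0) (diff_term x0 y z i j)) =
   (x0, coord x0 y z (q ! i) - coord x0 y z (q ! j), x0)"
  by (simp add: diff_term_def model_coord_term)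

lemma model_comm_eq:
  assumes c: "Phi x0 c = (x0, h, x0)"
  shows "leval (rmul x0) (rinv x0) q (map_ltrm (Phi x0) (fst (comm_eq x0 y z y' z' c))) =
           (x0, (coord x0 y z (q ! 0) - coord x0 y z (q ! 1)) +
                (h + ((coord x0 y' z' (q ! 2) - coord x0 y' z' (q ! 3)) - h)), x0)"
    and "leval (rmul x0) (rinv x0) q (map_ltrm (Phi x0) (snd (comm_eq x0 y z y' z' c))) =
           (x0, (h + ((coord x0 y' z' (q ! 2) - coord x0 y' z' (q ! 3)) - h)) +
                (coord x0 y z (q ! 0) - coord x0 y z (q ! 1)), x0)"
  using c by (simp_all add: comm_eq_def conj_term_def model_diff_term add.assoc)

lemma comm_eq_iff:
  fixes x0 y z y' z' :: 'x and p :: "'x fcss list"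
  assumes p: "length p = 4" and c: "Phi x0 c = (x0, h, x0)"
  defines "a \<equiv> coord x0 y z (Phi x0 (p ! 0)) - coord x0 y z (Phi x0 (p ! 1))"
    and "b \<equiv> coord x0 y' z' (Phi x0 (p ! 2)) - coord x0 y' z' (Phi x0 (p ! 3))"
  shows "leval fcss_mul fcss_inv p (fst (comm_eq x0 y z y' z' c)) =
         leval fcss_mul fcss_inv p (snd (comm_eq x0 y z y' z' c))
    \<longleftrightarrow> a + (h + (b - h)) = (h + (b - h)) + a"
proof -
  have "lvars (fst (comm_eq x0 y z y' z' c)) \<union> lvars (snd (comm_eq x0 y z y' z' c)) \<subseteq> {..<4}"
    by (rule lvars_comm_eq) simp
  then have vars: "\<forall>i\<in>lvars (fst (comm_eq x0 y z y' z' c)). i < length p"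
    "\<forall>i\<in>lvars (snd (comm_eq x0 y z y' z' c)). i < length p"
    using p by auto
  show ?thesis
    apply (subst Phi_inj[of x0, symmetric])
    apply (simp only: Phi_leval[OF vars(1)] Phi_leval[OF vars(2)] model_comm_eq[OF c])
    using p by (simp add: a_def b_def)
qed

theorem comm_system_disjunction:
  assumes y1: "y1 \<noteq> x0"
  shows "disjunction_system fcss_mul fcss_inv (comm_system x0)"
  unfolding disjunction_system_def
proof (intro conjI allI impI)
  have "lvars l \<union> lvars r \<subseteq> {..<4}" if lr: "(l, r) \<in> comm_system x0" for l r
  proof -
    obtain y z y' z' c where "(l, r) = comm_eq x0 y z y' z' c"
      using lr unfolding comm_system_def by blast
    then show ?thesis using lvars_comm_eq by metis
  qed
  then show "\<forall>(l, r)\<in>comm_system x0. lvars l \<union> lvars r \<subseteq> {..<4}" by blast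
next
  fix p :: "'a fcss list" assume p: "length p = 4"
  let ?sat = "\<lambda>(l, r). leval fcss_mul fcss_inv p l = leval fcss_mul fcss_inv p r"
  show "(\<forall>e\<in>comm_system x0. ?sat e) \<longleftrightarrow> p ! 0 = p ! 1 \<or> p ! 2 = p ! 3"
  proof
    text \<open>If both pairs differ, separate each pair by a coordinate and choose a
      conjugator making the two differences non-commuting.\<close>
    assume all: "\<forall>e\<in>comm_system x0. ?sat e"
    show "p ! 0 = p ! 1 \<or> p ! 2 = p ! 3"
    proof (rule ccontr)
      assume "\<not> (p ! 0 = p ! 1 \<or> p ! 2 = p ! 3)"
      then have "Phi x0 (p ! 0) \<noteq> Phi x0 (p ! 1)" "Phi x0 (p ! 2) \<noteq> Phi x0 (p ! 3)"
        by (simp_all add: Phi_inj)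
      then obtain y z y' z' where
        "coord x0 y z (Phi x0 (p ! 0)) \<noteq> coord x0 y z (Phi x0 (p ! 1))"
        "coord x0 y' z' (Phi x0 (p ! 2)) \<noteq> coord x0 y' z' (Phi x0 (p ! 3))"
        using coord_separates[OF y1] by blast
      then have a: "coord x0 y z (Phi x0 (p ! 0)) - coord x0 y z (Phi x0 (p ! 1)) \<noteq> 0" (is "?a \<noteq> 0")
        and b: "coord x0 y' z' (Phi x0 (p ! 2)) - coord x0 y' z' (Phi x0 (p ! 3)) \<noteq> 0" (is "?b \<noteq> 0")
        by simp_all
      obtain h where "h \<in> Hset x0" and hne: "?a + (h + (?b - h)) \<noteq> h + (?b - h) + ?a"
        using noncomm[OF y1 a b] by blast
      then obtain c where c: "Phi x0 c = (x0, h, x0)" unfolding Hset_def by blast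
      then have "comm_eq x0 y z y' z' c \<in> comm_system x0" unfolding comm_system_def by blast
      with all have "?sat (comm_eq x0 y z y' z' c)" by (rule bspec)
      then show False using hne comm_eq_iff[OF p c] by (simp add: case_prod_beta)
    qed
  next
    text \<open>If one pair coincides, one factor of every commutator is trivial.\<close>
    assume eq: "p ! 0 = p ! 1 \<or> p ! 2 = p ! 3"
    show "\<forall>e\<in>comm_system x0. ?sat e"
    proof
      fix e assume "e \<in> comm_system x0"
      then obtain y z y' z' c h where e: "e = comm_eq x0 y z y' z' c" and c: "Phi x0 c = (x0, h, x0)"
        unfolding comm_system_def by blast
      show "?sat e" using eq comm_eq_iff[OF p c] by (auto simp: e case_prod_beta)
    qed
  qed
qed

theorem mainTheorem8:
  assumes "card (UNIV :: ('x::finite) set) \<ge> 2"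
  shows "equational_domain (fcss_mul :: 'x fcss \<Rightarrow> 'x fcss \<Rightarrow> 'x fcss) fcss_inv"
proof -
  have "\<not> (\<forall>a\<in>(UNIV :: 'x set). \<forall>b\<in>UNIV. a = b)"
    using assms card_le_Suc0_iff_eq[of "UNIV :: 'x set"] by auto
  then obtain x0 y1 :: 'x where y1: "y1 \<noteq> x0" by blast
  have "cv x0 \<noteq> cv y1"
    using y1 Phi_cv[of x0 x0] Phi_cv[of x0 y1] by (auto simp: rgen_def)
  then show ?thesis
    by (rule equational_domain_if_disjunction_system[OF _ comm_system_disjunction[OF y1]])
qed

end
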